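(* Fix integers $n \ge 2$, $1 \le i \le n-1$, and positive integers $e_1, \ldots, e_{n-1}$. For a prime $p$ and integers $a_{rs}$ ($1 \le r < s \le n-1$) with $0 \le a_{rs} < p^{e_r - 1}$, let $A = A(p,(a_{rs}))$ be the $n\times n$ upper triangular integer matrix with $A_{rr} = p^{e_r}$ for $r < n$, $A_{nn} = 1$, $A_{rs} = p\,a_{rs}$ for $1 \le r < s \le n-1$, last column $(1,\ldots,1)^T$, and zeros below the diagonal; denote its columns by $v_1, \ldots, v_n$. Then the number of choices of the tuple $\{a_{rs} : 1 \le r < s \le i\}$ (with $0 \le a_{rs} < p^{e_r-1}$) such that $v_i \circ v_i$ lies in the $\mathbb{Z}$-column span of $A$ is a polynomial in $p$; that is, there is a polynomial $P \in \mathbb{Q}[x]$ (depending on $n, i, e_1,\ldots,e_{n-1}$) such that this number equals $P(p)$ for every prime $p$.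
   Context: For vectors $x=(x_1,\ldots,x_n)^T$, $y=(y_1,\ldots,y_n)^T$, $x \circ y = (x_1y_1, \ldots, x_ny_n)^T$ denotes the componentwise product. The condition $v_i \circ v_i \in \mathrm{Col}(A)$ means $v_i\circ v_i = A x$ for some $x \in \mathbb{Z}^n$; it only involves the variables $a_{rs}$ with $s \le i$. *)

theory Defs
  imports Main "HOL-Computational_Algebra.Polynomial" "HOL-Computational_Algebra.Primes"
begin

text \<open>Matrices are functions nat => nat => int with 1-based indices 1..n.\<close>
definition Amat :: "nat \<Rightarrow> (nat \<Rightarrow> nat) \<Rightarrow> int \<Rightarrow> (nat \<Rightarrow> nat \<Rightarrow> int) \<Rightarrow> nat \<Rightarrow> nat \<Rightarrow> int" where
  "Amat n e p a r s =
     (if s = n then 1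
      else if r = s then p ^ (e r)
      else if r < s then p * a r s
      else 0)"

definition col :: "(nat \<Rightarrow> nat \<Rightarrow> int) \<Rightarrow> nat \<Rightarrow> nat \<Rightarrow> int" where
  "col M j = (\<lambda>r. M r j)"

definition hadamard :: "(nat \<Rightarrow> int) \<Rightarrow> (nat \<Rightarrow> int) \<Rightarrow> nat \<Rightarrow> int" where
  "hadamard x y = (\<lambda>r. x r * y r)"

definition in_int_col_span :: "nat \<Rightarrow> (nat \<Rightarrow> nat \<Rightarrow> int) \<Rightarrow> (nat \<Rightarrow> int) \<Rightarrow> bool" where
  "in_int_col_span n M w =
     (\<exists>x :: nat \<Rightarrow> int. \<forall>r \<in> {1..n}. w r = (\<Sum>s = 1..n. M r s * x s))"

definition tuples :: "nat \<Rightarrow> (nat \<Rightarrow> nat) \<Rightarrow> nat \<Rightarrow> (nat \<Rightarrow> nat \<Rightarrow> int) set" where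
  "tuples i e p =
     {a. (\<forall>r s. 1 \<le> r \<and> r < s \<and> s \<le> i \<longrightarrow> 0 \<le> a r s \<and> a r s < int p ^ (e r - 1)) \<and>
         (\<forall>r s. \<not> (1 \<le> r \<and> r < s \<and> s \<le> i) \<longrightarrow> a r s = 0)}"

text \<open>The count: number of admissible tuples such that v_i o v_i is in Col(A).
  Entries a_rs with s > i (which the condition does not involve) are set to 0.\<close>
definition count_sq :: "nat \<Rightarrow> nat \<Rightarrow> (nat \<Rightarrow> nat) \<Rightarrow> nat \<Rightarrow> nat" where
  "count_sq n i e p =
     card {a \<in> tuples i e p.
       in_int_col_span n (Amat n e (int p) a)
         (hadamard (col (Amat n e (int p) a) i) (col (Amat n e (int p) a) i))}"

end

theory Submission
  imports Defs "HOL-Library.Function_Algebras" "HOL-Number_Theory.Cong"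
begin

text \<open>
  Read A x = v_i o v_i row by row, with a_rs = 0 for s > i. The last row gives x_n = 0, the rows
  r > i then give x_r = 0, row i gives x_i = p^(e_i), and row j < i asks that p^(e_j) divide
  p^2 a_ji^2 - p * (sum over s > j of a_js x_s), which then determines x_j. So a tuple is counted
  iff this back-substitution goes through for j = i-1, ..., 1.

  Processing the rows bottom-up, the number of ways to choose rows 1..r depends on the already
  computed x_s (r < s < i) only through min(e_1 + ... + e_r, min_s v_p(x_s)): larger valuations
  cannot affect the remaining divisibility conditions. For a single row, the number of choices
  moving this capped valuation from g to t is a polynomial in p: the condition is linear in the
  a_js with s < i, where a coefficient of minimal valuation makes the count uniform, and quadratic
  in a_ji, where the roots of b (b - p^D) modulo p^m are counted by induction on D. Summing over
  the intermediate valuations gives a polynomial.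
\<close>

section \<open>Polynomials in a prime\<close>

definition poly_on_primes :: "(nat \<Rightarrow> rat) \<Rightarrow> bool" where
  "poly_on_primes f \<longleftrightarrow> (\<exists>P. \<forall>p. prime p \<longrightarrow> f p = poly P (of_nat p))"

lemma poly_on_primes_const: "poly_on_primes (\<lambda>p. c)"
  unfolding poly_on_primes_def by (rule exI[of _ "[:c:]"]) simp

lemma poly_on_primes_power: "poly_on_primes (\<lambda>p. of_nat p ^ j)"
  unfolding poly_on_primes_def by (rule exI[of _ "monom 1 j"]) (simp add: poly_monom)

lemma poly_on_primes_add: "poly_on_primes f \<Longrightarrow> poly_on_primes g \<Longrightarrow> poly_on_primes (\<lambda>p. f p + g p)"
  unfolding poly_on_primes_def by (metis poly_add)

lemma poly_on_primes_diff: "poly_on_primes f \<Longrightarrow> poly_on_primes g \<Longrightarrow> poly_on_primes (\<lambda>p. f p - g p)"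
  unfolding poly_on_primes_def by (metis poly_diff)

lemma poly_on_primes_mult: "poly_on_primes f \<Longrightarrow> poly_on_primes g \<Longrightarrow> poly_on_primes (\<lambda>p. f p * g p)"
  unfolding poly_on_primes_def by (metis poly_mult)

lemma poly_on_primes_If:
  "poly_on_primes f \<Longrightarrow> poly_on_primes g \<Longrightarrow> poly_on_primes (\<lambda>p. if b then f p else g p)"
  by (cases b) simp_all

lemma poly_on_primes_cong: "poly_on_primes f \<Longrightarrow> (\<And>p. prime p \<Longrightarrow> g p = f p) \<Longrightarrow> poly_on_primes g"
  unfolding poly_on_primes_def by metis

(* Like PiE, but with value 0 instead of undefined outside S, matching the zero-padded tuples of count_sq. *)
definition zero_PiE :: "'a set \<Rightarrow> ('a \<Rightarrow> 'b::zero set) \<Rightarrow> ('a \<Rightarrow> 'b) set" where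
  "zero_PiE S K = {f. (\<forall>x\<in>S. f x \<in> K x) \<and> (\<forall>x. x \<notin> S \<longrightarrow> f x = 0)}"

lemma zero_PiE_empty [simp]: "zero_PiE {} K = {0}"
  unfolding zero_PiE_def by (auto simp: zero_fun_def)

lemma zero_PiE_insert:
  assumes "x \<notin> S"
  shows "zero_PiE (insert x S) K = (\<lambda>(b, f). f(x := b)) ` (K x \<times> zero_PiE S K)"
proof (intro set_eqI iffI)
  fix g assume g: "g \<in> zero_PiE (insert x S) K"
  then have "(g x, g(x := 0)) \<in> K x \<times> zero_PiE S K"
    using assms unfolding zero_PiE_def by auto
  then show "g \<in> (\<lambda>(b, f). f(x := b)) ` (K x \<times> zero_PiE S K)"
    by (rule rev_image_eqI) simp
qed (auto simp: zero_PiE_def)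

lemma inj_on_zero_PiE_insert:
  assumes "x \<notin> S"
  shows "inj_on (\<lambda>(b, f). f(x := b)) (K x \<times> zero_PiE S K)"
proof (rule inj_onI, clarify)
  fix b f b' f'
  assume "f \<in> zero_PiE S K" "f' \<in> zero_PiE S K" and eq: "f(x := b) = f'(x := b')"
  then have "f x = f' x" using assms unfolding zero_PiE_def by simp
  with eq show "b = b' \<and> f = f'" by (metis fun_upd_idem_iff fun_upd_same fun_upd_upd)
qed

lemma finite_zero_PiE:
  "finite S \<Longrightarrow> (\<And>x. x \<in> S \<Longrightarrow> finite (K x)) \<Longrightarrow> finite (zero_PiE S K)"
  by (induction S rule: finite_induct) (simp_all add: zero_PiE_insert)

lemma card_zero_PiE_insert_filter:
  assumes "x \<notin> S"
  shows "card {g \<in> zero_PiE (insert x S) K. P g} =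
         card (Sigma (K x) (\<lambda>b. {f \<in> zero_PiE S K. P (f(x := b))}))"
proof -
  have "{g \<in> zero_PiE (insert x S) K. P g} =
        (\<lambda>(b, f). f(x := b)) ` Sigma (K x) (\<lambda>b. {f \<in> zero_PiE S K. P (f(x := b))})"
    unfolding zero_PiE_insert[OF assms] by auto
  moreover have "inj_on (\<lambda>(b, f). f(x := b)) (Sigma (K x) (\<lambda>b. {f \<in> zero_PiE S K. P (f(x := b))}))"
    by (rule inj_on_subset[OF inj_on_zero_PiE_insert[OF assms]]) auto
  ultimately show ?thesis by (simp add: card_image)
qed

lemma card_zero_PiE_insert_outer:
  assumes "x \<notin> S" "finite (K x)" "finite (zero_PiE S K)"
  shows "card {g \<in> zero_PiE (insert x S) K. P g} =
         (\<Sum>b\<in>K x. card {f \<in> zero_PiE S K. P (f(x := b))})"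
  unfolding card_zero_PiE_insert_filter[OF assms(1)] using assms(2,3) by simp

lemma card_zero_PiE_insert_inner:
  assumes "x \<notin> S" "finite (K x)" "finite (zero_PiE S K)"
  shows "card {g \<in> zero_PiE (insert x S) K. P g} =
         (\<Sum>f\<in>zero_PiE S K. card {b \<in> K x. P (f(x := b))})"
proof -
  have "Sigma (K x) (\<lambda>b. {f \<in> zero_PiE S K. P (f(x := b))}) =
        prod.swap ` Sigma (zero_PiE S K) (\<lambda>f. {b \<in> K x. P (f(x := b))})"
    by auto
  then show ?thesis
    unfolding card_zero_PiE_insert_filter[OF assms(1)] using assms(2,3)
    by (simp add: card_image)
qed

lemma card_zero_PiE:
  "finite S \<Longrightarrow> (\<And>x. x \<in> S \<Longrightarrow> finite (K x)) \<Longrightarrow> card (zero_PiE S K) = (\<Prod>x\<in>S. card (K x))"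
proof (induction S rule: finite_induct)
  case (insert x S)
  then show ?case
    using card_zero_PiE_insert_outer[of x S K "\<lambda>_. True"] finite_zero_PiE[of S K] by simp
qed simp

abbreviation box :: "nat \<Rightarrow> nat \<Rightarrow> 'a set \<Rightarrow> ('a \<Rightarrow> int) set" where
  "box p k S \<equiv> zero_PiE S (\<lambda>_. {0..<int p ^ k})"

lemma finite_box: "finite S \<Longrightarrow> finite (box p k S)"
  by (simp add: finite_zero_PiE)

lemma card_box: "finite S \<Longrightarrow> card (box p k S) = p ^ (k * card S)"
  by (simp add: card_zero_PiE power_mult flip: of_nat_power)

section \<open>Counting solutions of congruences\<close>

lemma power_dvd_power_mult_iff:
  fixes P X :: "'a::idom"
  assumes "P \<noteq> 0"
  shows "P ^ m dvd P ^ j * X \<longleftrightarrow> P ^ (m - j) dvd X"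
proof (cases "j \<le> m")
  case True
  then have "P ^ m = P ^ j * P ^ (m - j)" by (simp flip: power_add)
  with assms show ?thesis by simp
next
  case False
  then show ?thesis by (simp add: le_imp_power_dvd)
qed

lemma card_interval_cong:
  fixes m c :: int
  assumes "m > 0"
  shows "card {a \<in> {0..<m * int N}. [a = c] (mod m)} = N"
proof -
  have "{a \<in> {0..<m * int N}. [a = c] (mod m)} = (\<lambda>j. c mod m + m * j) ` {0..<int N}"
  proof (intro set_eqI iffI)
    fix a assume "a \<in> {a \<in> {0..<m * int N}. [a = c] (mod m)}"
    then have a: "0 \<le> a" "a < m * int N" "[a = c] (mod m)" by auto
    then have "a = c mod m + m * (a div m)" using mult_div_mod_eq[of m a]
      by (simp add: cong_def)
    moreover have "a div m \<in> {0..<int N}"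
    proof -
      have "m * (a div m) < m * int N"
        using a mult_div_mod_eq[of m a] pos_mod_sign[of m a] assms by linarith
      then show ?thesis using a assms by (simp add: pos_imp_zdiv_nonneg_iff)
    qed
    ultimately show "a \<in> (\<lambda>j. c mod m + m * j) ` {0..<int N}" by (rule image_eqI)
  next
    fix a assume "a \<in> (\<lambda>j. c mod m + m * j) ` {0..<int N}"
    then obtain j where j: "0 \<le> j" "j < int N" "a = c mod m + m * j" by auto
    have "m * j + m \<le> m * int N"
    proof -
      have "m * (j + 1) \<le> m * int N" using j assms by (intro mult_left_mono) auto
      then show ?thesis by (simp add: algebra_simps)
    qed
    moreover have "0 \<le> m * j" "0 \<le> c mod m" "c mod m < m" using j assms by simp_all
    ultimately show "a \<in> {a \<in> {0..<m * int N}. [a = c] (mod m)}"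
      using j by (simp add: cong_def)
  qed
  moreover have "inj_on (\<lambda>j. c mod m + m * j) {0..<int N}"
    using assms by (auto simp: inj_on_def)
  ultimately show ?thesis by (simp add: card_image)
qed

lemma cong_mult_inverse_iff:
  fixes a u s w n :: int
  assumes "coprime u n" "[u * s = 1] (mod n)"
  shows "[a * u = w] (mod n) \<longleftrightarrow> [a = w * s] (mod n)"
proof -
  have "[w * (u * s) = w * 1] (mod n)" using assms(2) by (rule cong_scalar_left)
  then have "[w * s * u = w] (mod n)" by (simp add: ac_simps)
  then have "[a * u = w] (mod n) \<longleftrightarrow> [a * u = w * s * u] (mod n)" by (meson cong_sym cong_trans)
  also have "\<dots> \<longleftrightarrow> [a = w * s] (mod n)" by (rule cong_mult_rcancel[OF assms(1)])
  finally show ?thesis .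
qed

lemma card_interval_dvd_diff_mult:
  fixes p :: nat and y w :: int
  assumes p: "prime p" and hy: "int p ^ h dvd y" "\<not> int p ^ Suc h dvd y"
    and hm: "h \<le> m" "m \<le> h + k"
  shows "card {a \<in> {0..<int p ^ k}. int p ^ m dvd w - a * y} =
         (if int p ^ h dvd w then p ^ (k - (m - h)) else 0)"
proof (cases "int p ^ h dvd w")
  case False
  have "\<not> int p ^ m dvd w - a * y" for a
  proof
    assume "int p ^ m dvd w - a * y"
    moreover have "int p ^ h dvd int p ^ m" using hm by (simp add: le_imp_power_dvd)
    ultimately have "int p ^ h dvd (w - a * y) + a * y" using hy(1) by (meson dvd_add dvd_mult dvd_trans)
    with False show False by simp
  qed
  with False show ?thesis by simp
next
  case True
  define P d where "P = int p" and "d = m - h"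
  have P: "prime P" "P > 0" using p by (simp_all add: P_def prime_gt_0_nat)
  obtain u where u: "y = P ^ h * u" using hy(1) by (auto simp: P_def elim: dvdE)
  obtain w' where w': "w = P ^ h * w'" using True by (auto simp: P_def elim: dvdE)
  have "\<not> P dvd u" using hy(2) u by (auto simp: P_def)
  then have cop: "coprime u (P ^ d)" by (rule prime_imp_power_coprime[OF P(1)])
  then obtain s where s: "[u * s = 1] (mod P ^ d)" using cong_solve_coprime_int by blast
  have "int p ^ m dvd w - a * y \<longleftrightarrow> [a = w' * s] (mod P ^ d)" for a
  proof -
    have "int p ^ m dvd w - a * y \<longleftrightarrow> P ^ h * P ^ d dvd P ^ h * (w' - a * u)"
      using hm by (simp add: P_def d_def u w' algebra_simps flip: power_add)
    also have "\<dots> \<longleftrightarrow> [a * u = w'] (mod P ^ d)"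
      using P by (simp add: cong_iff_dvd_diff dvd_diff_commute)
    also have "\<dots> \<longleftrightarrow> [a = w' * s] (mod P ^ d)"
      by (rule cong_mult_inverse_iff[OF cop s])
    finally show ?thesis .
  qed
  moreover have "int p ^ k = P ^ d * int (p ^ (k - d))"
    using hm by (simp add: P_def d_def flip: power_add)
  ultimately have "{a \<in> {0..<int p ^ k}. int p ^ m dvd w - a * y} =
                   {a \<in> {0..<P ^ d * int (p ^ (k - d))}. [a = w' * s] (mod P ^ d)}"
    by simp
  with True P card_interval_cong[of "P ^ d" "p ^ (k - d)" "w' * s"] show ?thesis
    by (simp add: d_def)
qed

lemma card_interval_dvd_diff:
  fixes p :: nat and c :: int
  assumes p: "prime p" and c: "0 \<le> c" "c \<le> int p ^ N"
  shows "card {b \<in> {0..<int p ^ N}. int p ^ m dvd b - c} =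
         (if m \<le> N then p ^ (N - m) else if c < int p ^ N then 1 else 0)"
proof (cases "m \<le> N")
  case True
  have "{b \<in> {0..<int p ^ N}. int p ^ m dvd b - c} = {b \<in> {0..<int p ^ N}. int p ^ m dvd c - b * 1}"
    by (simp add: dvd_diff_commute)
  with True p prime_gt_1_nat[OF p] show ?thesis
    using card_interval_dvd_diff_mult[of p 0 1 m N c] by simp
next
  case False
  have "int p ^ N < int p ^ m"
    using False prime_gt_1_nat[OF p] by (intro power_strict_increasing) auto
  then have "int p ^ m dvd b - c \<longleftrightarrow> b = c" if "b \<in> {0..<int p ^ N}" for b
    using that c dvd_imp_le_int[of "b - c" "int p ^ m"] by force
  then have "{b \<in> {0..<int p ^ N}. int p ^ m dvd b - c} = {0..<int p ^ N} \<inter> {c}" by auto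
  with False c show ?thesis by simp
qed

lemma sum_fun_upd_insert:
  assumes "x \<notin> S" "finite S"
  shows "(\<Sum>s\<in>insert x S. (f(x := b)) s * y s) = b * y x + (\<Sum>s\<in>S. f s * y s)"
proof -
  have "(\<Sum>s\<in>S. (f(x := b)) s * y s) = (\<Sum>s\<in>S. f s * y s)"
    using assms(1) by (intro sum.cong) auto
  with assms show ?thesis by simp
qed

(* A coordinate whose coefficient has valuation exactly h makes the count uniform in the other coordinates. *)
lemma card_box_dvd_diff_sum:
  fixes p :: nat and y :: "'a \<Rightarrow> int"
  assumes p: "prime p" and S: "finite S" and hy: "\<forall>s\<in>S. int p ^ h dvd y s"
    and hm: "h \<le> m" "m \<le> h + k" and wit: "h < m \<Longrightarrow> \<exists>s\<in>S. \<not> int p ^ Suc h dvd y s"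
  shows "card {f \<in> box p k S. int p ^ m dvd w - (\<Sum>s\<in>S. f s * y s)} =
         (if int p ^ h dvd w then p ^ (k * card S - (m - h)) else 0)"
proof (cases "h = m")
  case True
  have "int p ^ m dvd (\<Sum>s\<in>S. f s * y s)" for f using hy True by (auto intro!: dvd_sum)
  then have "{f \<in> box p k S. int p ^ m dvd w - (\<Sum>s\<in>S. f s * y s)} =
             (if int p ^ m dvd w then box p k S else {})"
    by (auto simp: dvd_diff_left_iff)
  with True S show ?thesis by (simp add: card_box)
next
  case False
  with hm obtain s0 where s0: "s0 \<in> S" "\<not> int p ^ Suc h dvd y s0" using wit by force
  define S0 where "S0 = S - {s0}"
  have S0: "s0 \<notin> S0" "finite S0" "S = insert s0 S0" using S s0 by (auto simp: S0_def)
  let ?T0 = "\<lambda>f. \<Sum>s\<in>S0. f s * y s"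
  have "card {f \<in> box p k S. int p ^ m dvd w - (\<Sum>s\<in>S. f s * y s)} =
        (\<Sum>f\<in>box p k S0. card {b \<in> {0..<int p ^ k}.
           int p ^ m dvd w - (\<Sum>s\<in>insert s0 S0. (f(s0 := b)) s * y s)})"
    unfolding S0(3) by (rule card_zero_PiE_insert_inner) (use S0 finite_box in auto)
  also have "\<dots> = (\<Sum>f\<in>box p k S0. card {b \<in> {0..<int p ^ k}. int p ^ m dvd (w - ?T0 f) - b * y s0})"
    by (simp only: sum_fun_upd_insert[OF S0(1,2)] diff_diff_eq add.commute)
  also have "\<dots> = (\<Sum>f\<in>box p k S0. if int p ^ h dvd w then p ^ (k - (m - h)) else 0)"
  proof (rule sum.cong[OF refl])
    fix f
    have "int p ^ h dvd ?T0 f" using hy S0 by (auto intro!: dvd_sum)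
    then have "int p ^ h dvd w - ?T0 f \<longleftrightarrow> int p ^ h dvd w"
      by (rule dvd_diff_left_iff)
    then show "card {b \<in> {0..<int p ^ k}. int p ^ m dvd (w - ?T0 f) - b * y s0} =
               (if int p ^ h dvd w then p ^ (k - (m - h)) else 0)"
      using card_interval_dvd_diff_mult[OF p _ s0(2) hm] hy s0(1) by simp
  qed
  also have "\<dots> = (if int p ^ h dvd w then p ^ (k * card S - (m - h)) else 0)"
  proof -
    have "k * card S0 + (k - (m - h)) = k * card S - (m - h)" using S0 hm by simp
    then show ?thesis using S0(2) by (simp add: card_box flip: power_add)
  qed
  finally show ?thesis .
qed

lemma prime_power_not_dvd_both:
  fixes P b :: int
  assumes "prime P" "m \<ge> 1"
  shows "\<not> (P ^ m dvd b \<and> P ^ m dvd b - 1)"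
proof
  assume "P ^ m dvd b \<and> P ^ m dvd b - 1"
  then have "P ^ m dvd 1" by (auto simp: dvd_diff_right_iff)
  moreover have "P dvd P ^ m" using assms(2) by (cases m) auto
  ultimately have "P dvd 1" by (rule dvd_trans[rotated])
  with assms(1) show False using not_prime_unit by blast
qed

lemma prime_power_dvd_mult_pred_iff:
  fixes P b :: int
  assumes "prime P"
  shows "P ^ m dvd b * (b - 1) \<longleftrightarrow> P ^ m dvd b \<or> P ^ m dvd b - 1"
proof (cases "m = 0")
  case False
  have P: "prime_elem P" using assms by (rule prime_imp_prime_elem)
  show ?thesis
  proof
    assume dvd: "P ^ m dvd b * (b - 1)"
    show "P ^ m dvd b \<or> P ^ m dvd b - 1"
    proof (cases "P dvd b")
      case True
      then have "\<not> P dvd b - 1" using prime_power_not_dvd_both[OF assms, of 1] by auto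
      then show ?thesis
        using prime_power_dvd_multD[OF P, of m "b - 1" b] dvd False by (simp add: mult.commute)
    next
      case False
      then show ?thesis using prime_power_dvd_multD[OF P, of m b "b - 1"] dvd \<open>m \<noteq> 0\<close> by simp
    qed
  qed auto
qed simp

definition quad_root_count :: "nat \<Rightarrow> nat \<Rightarrow> nat \<Rightarrow> nat \<Rightarrow> nat" where
  "quad_root_count p N m D = card {b \<in> {0..<int p ^ N}. int p ^ m dvd b * (b - int p ^ D)}"

lemma quad_root_count_modulus_one [simp]: "quad_root_count p N 0 D = p ^ N"
proof -
  have "{b \<in> {0..<int p ^ N}. int p ^ 0 dvd b * (b - int p ^ D)} = {0..<int (p ^ N)}" by auto
  then show ?thesis by (simp add: quad_root_count_def del: of_nat_power)
qed

lemma quad_root_count_range_one [simp]: "quad_root_count p 0 m D = 1"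
proof -
  have "{b \<in> {0..<int p ^ 0}. int p ^ m dvd b * (b - int p ^ D)} = {0}" by auto
  then show ?thesis by (simp add: quad_root_count_def)
qed

lemma quad_root_count_shift_one:
  assumes p: "prime p" and m: "m \<ge> 1"
  shows "quad_root_count p N m 0 = (if m \<le> N then 2 * p ^ (N - m) else if N = 0 then 1 else 2)"
proof -
  define A where "A c = {b \<in> {0..<int p ^ N}. int p ^ m dvd b - c}" for c
  have P: "prime (int p)" using p by simp
  have "{b \<in> {0..<int p ^ N}. int p ^ m dvd b * (b - int p ^ 0)} = A 0 \<union> A 1"
    using prime_power_dvd_mult_pred_iff[OF P] by (auto simp: A_def)
  moreover have "A 0 \<inter> A 1 = {}"
    using prime_power_not_dvd_both[OF P m] by (auto simp: A_def)
  moreover have "finite (A c)" for c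
    by (rule finite_subset[of _ "{0..<int p ^ N}"]) (auto simp: A_def)
  ultimately have "quad_root_count p N m 0 = card (A 0) + card (A 1)"
    by (simp add: quad_root_count_def card_Un_disjoint)
  moreover have "card (A 0) = (if m \<le> N then p ^ (N - m) else 1)"
    using card_interval_dvd_diff[OF p, of 0 N m] prime_gt_0_nat[OF p] by (simp add: A_def)
  moreover have "card (A 1) = (if m \<le> N then p ^ (N - m) else if N = 0 then 0 else 1)"
  proof -
    have "1 \<le> int p ^ N" using prime_gt_1_nat[OF p] by simp
    moreover have "1 < int p ^ N \<longleftrightarrow> N \<noteq> 0"
      using prime_gt_1_nat[OF p] one_less_power[of "int p" N] by (cases "N = 0") simp_all
    ultimately show ?thesis using card_interval_dvd_diff[OF p, of 1 N m] by (simp add: A_def)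
  qed
  ultimately show ?thesis by simp
qed

(* Every root is divisible by p, and b = p c rescales the problem. *)
lemma quad_root_count_shift_Suc:
  assumes p: "prime p" and N: "N \<ge> 1" and m: "m \<ge> 1"
  shows "quad_root_count p N m (Suc D) = quad_root_count p (N - 1) (m - 2) D"
proof -
  define P where "P = int p"
  have P: "prime P" "P > 0" using p by (simp_all add: P_def prime_gt_0_nat)
  have scaled: "P ^ m dvd (P * c) * (P * c - P ^ Suc D) \<longleftrightarrow> P ^ (m - 2) dvd c * (c - P ^ D)" for c
  proof -
    have "(P * c) * (P * c - P ^ Suc D) = P ^ 2 * (c * (c - P ^ D))"
      by (simp add: algebra_simps power2_eq_square)
    moreover have "P ^ m dvd P ^ 2 * X \<longleftrightarrow> P ^ (m - 2) dvd X" for X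
      using P(2) by (simp add: power_dvd_power_mult_iff)
    ultimately show ?thesis by (simp only:)
  qed
  have PN: "P ^ N = P * P ^ (N - 1)" using N by (simp flip: power_Suc)
  have "{b \<in> {0..<P ^ N}. P ^ m dvd b * (b - P ^ Suc D)} =
        (*) P ` {c \<in> {0..<P ^ (N - 1)}. P ^ (m - 2) dvd c * (c - P ^ D)}"
  proof (intro set_eqI iffI)
    fix b assume b: "b \<in> {b \<in> {0..<P ^ N}. P ^ m dvd b * (b - P ^ Suc D)}"
    have "P dvd b"
    proof -
      have "P dvd b * (b - P ^ Suc D)"
        using b m dvd_trans[OF dvd_power[of m P]] by auto
      then have "P dvd b \<or> P dvd b - P ^ Suc D" using P(1) by (simp add: prime_dvd_mult_iff)
      then show ?thesis by (auto simp: dvd_diff_left_iff)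
    qed
    then obtain c where c: "b = P * c" by (elim dvdE)
    then have "c \<in> {c \<in> {0..<P ^ (N - 1)}. P ^ (m - 2) dvd c * (c - P ^ D)}"
      using b P PN scaled by (simp add: zero_le_mult_iff)
    with c show "b \<in> (*) P ` {c \<in> {0..<P ^ (N - 1)}. P ^ (m - 2) dvd c * (c - P ^ D)}" by blast
  next
    fix b assume "b \<in> (*) P ` {c \<in> {0..<P ^ (N - 1)}. P ^ (m - 2) dvd c * (c - P ^ D)}"
    then show "b \<in> {b \<in> {0..<P ^ N}. P ^ m dvd b * (b - P ^ Suc D)}"
      using scaled P PN by auto
  qed
  moreover have "inj_on ((*) P) A" for A using P by (simp add: inj_on_def)
  ultimately show ?thesis by (simp add: quad_root_count_def card_image flip: P_def)
qed

lemma poly_on_primes_quad_root_count: "poly_on_primes (\<lambda>p. of_nat (quad_root_count p N m D))"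
proof (induction D arbitrary: N m)
  case 0
  show ?case
  proof (cases "m = 0")
    case False
    have "poly_on_primes (\<lambda>p. (if m \<le> N then 2 else 0) * of_nat p ^ (N - m) +
                              (if m \<le> N then 0 else if N = 0 then 1 else 2))"
      by (intro poly_on_primes_add poly_on_primes_mult poly_on_primes_const poly_on_primes_power)
    then show ?thesis
      by (rule poly_on_primes_cong) (use False in \<open>simp add: quad_root_count_shift_one\<close>)
  qed (simp add: poly_on_primes_power)
next
  case (Suc D)
  show ?case
  proof (cases "m = 0 \<or> N = 0")
    case True
    then show ?thesis using poly_on_primes_power[of N] poly_on_primes_const[of 1] by auto
  next
    case False
    then show ?thesis
      by (intro poly_on_primes_cong[OF Suc.IH[of "N - 1" "m - 2"]]) (simp add: quad_root_count_shift_Suc)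
  qed
qed

section \<open>Capped valuations\<close>

(* The minimum of c and the p-adic valuations of y on S; it equals c when S is empty. *)
definition capped_val :: "nat \<Rightarrow> nat \<Rightarrow> 'a set \<Rightarrow> ('a \<Rightarrow> int) \<Rightarrow> nat" where
  "capped_val p c S y = (GREATEST g. g \<le> c \<and> (\<forall>s\<in>S. int p ^ g dvd y s))"

lemma capped_val_eq_iff:
  "capped_val p c S y = g \<longleftrightarrow>
     g \<le> c \<and> (\<forall>s\<in>S. int p ^ g dvd y s) \<and> (g < c \<longrightarrow> (\<exists>s\<in>S. \<not> int p ^ Suc g dvd y s))"
proof -
  define Q where "Q g \<longleftrightarrow> g \<le> c \<and> (\<forall>s\<in>S. int p ^ g dvd y s)" for g
  have bound: "Q g \<Longrightarrow> g \<le> c" for g by (simp add: Q_def)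
  have "Q 0" by (simp add: Q_def)
  then have Q_max: "Q (capped_val p c S y)" and le_max: "Q g \<Longrightarrow> g \<le> capped_val p c S y" for g
    unfolding capped_val_def Q_def[symmetric]
    by (blast intro: GreatestI_nat Greatest_le_nat bound)+
  have Q_mono: "Q g \<Longrightarrow> g' \<le> g \<Longrightarrow> Q g'" for g g'
    unfolding Q_def by (meson dvd_trans le_imp_power_dvd le_trans)
  show ?thesis
  proof
    assume val: "capped_val p c S y = g"
    have "\<exists>s\<in>S. \<not> int p ^ Suc g dvd y s" if "g < c"
    proof -
      have "\<not> Q (Suc g)" using le_max[of "Suc g"] val by auto
      with that show ?thesis by (auto simp: Q_def)
    qed
    with Q_max val show "g \<le> c \<and> (\<forall>s\<in>S. int p ^ g dvd y s) \<and>
        (g < c \<longrightarrow> (\<exists>s\<in>S. \<not> int p ^ Suc g dvd y s))"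
      by (simp add: Q_def)
  next
    assume g: "g \<le> c \<and> (\<forall>s\<in>S. int p ^ g dvd y s) \<and> (g < c \<longrightarrow> (\<exists>s\<in>S. \<not> int p ^ Suc g dvd y s))"
    then have "\<not> Q (Suc g)" if "g < c" using that by (auto simp: Q_def)
    then have "\<not> g < capped_val p c S y"
      using Q_max Q_mono[of "capped_val p c S y" "Suc g"] bound[OF Q_max] by auto
    with g le_max[of g] show "capped_val p c S y = g" by (simp add: Q_def)
  qed
qed

lemma capped_val_le: "capped_val p c S y \<le> c"
  using capped_val_eq_iff[of p c S y "capped_val p c S y"] by simp

lemma capped_val_insert:
  assumes y: "capped_val p c S y = g" and c: "c' \<le> c" and r: "r \<notin> S" and t: "t \<le> c'"
  shows "capped_val p c' (insert r S) (y(r := v)) = t \<longleftrightarrow>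
         t \<le> g \<and> int p ^ t dvd v \<and> (t < c' \<and> t \<noteq> g \<longrightarrow> \<not> int p ^ Suc t dvd v)"
proof -
  have g: "g \<le> c" "\<forall>s\<in>S. int p ^ g dvd y s" "g < c \<longrightarrow> (\<exists>s\<in>S. \<not> int p ^ Suc g dvd y s)"
    using y by (simp_all add: capped_val_eq_iff)
  have all_dvd: "(\<forall>s\<in>S. int p ^ u dvd y s) \<longleftrightarrow> u \<le> g" if "u \<le> c" for u
  proof
    assume u: "\<forall>s\<in>S. int p ^ u dvd y s"
    show "u \<le> g"
    proof (rule ccontr)
      assume "\<not> u \<le> g"
      with g that obtain s where "s \<in> S" "\<not> int p ^ Suc g dvd y s" by auto
      with u \<open>\<not> u \<le> g\<close> show False by (meson dvd_trans le_imp_power_dvd not_less_eq_eq)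
    qed
  qed (use g in \<open>meson dvd_trans le_imp_power_dvd\<close>)
  have "capped_val p c' (insert r S) (y(r := v)) = t \<longleftrightarrow>
        int p ^ t dvd v \<and> t \<le> g \<and> (t < c' \<longrightarrow> \<not> int p ^ Suc t dvd v \<or> \<not> Suc t \<le> g)"
    using r t c all_dvd[of t] all_dvd[of "Suc t"] by (auto simp: capped_val_eq_iff)
  then show ?thesis by auto
qed

section \<open>Back-substitution\<close>

(* Row j of A x = v_i o v_i, once x_n = 0 and a_js = 0 for s > i, reads p^(e_j) x_j = row_rhs p i x j (a j). *)
definition row_rhs :: "nat \<Rightarrow> nat \<Rightarrow> (nat \<Rightarrow> int) \<Rightarrow> nat \<Rightarrow> (nat \<Rightarrow> int) \<Rightarrow> int" where
  "row_rhs p i x j row = int p ^ 2 * (row i)\<^sup>2 - int p * (\<Sum>s\<in>{Suc j..i}. row s * x s)"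

definition back_solvable ::
  "nat \<Rightarrow> (nat \<Rightarrow> nat) \<Rightarrow> nat \<Rightarrow> nat \<Rightarrow> (nat \<Rightarrow> int) \<Rightarrow> (nat \<Rightarrow> nat \<Rightarrow> int) \<Rightarrow> bool" where
  "back_solvable p e i r y a \<longleftrightarrow>
     (\<exists>x. (\<forall>s\<in>{Suc r..i}. x s = y s) \<and> (\<forall>j\<in>{1..r}. int p ^ e j * x j = row_rhs p i x j (a j)))"

abbreviation triangle_box :: "nat \<Rightarrow> (nat \<Rightarrow> nat) \<Rightarrow> nat \<Rightarrow> nat \<Rightarrow> (nat \<Rightarrow> nat \<Rightarrow> int) set" where
  "triangle_box p e i r \<equiv> zero_PiE {1..r} (\<lambda>j. box p (e j - 1) {Suc j..i})"

lemma row_rhs_cong: "(\<And>s. s \<in> {Suc j..i} \<Longrightarrow> x s = x' s) \<Longrightarrow> row_rhs p i x j row = row_rhs p i x' j row"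
  unfolding row_rhs_def by (metis (no_types, lifting) sum.cong)

lemma back_solvable_Suc:
  fixes y :: "nat \<Rightarrow> int" and a :: "nat \<Rightarrow> nat \<Rightarrow> int"
  assumes "p > 0" "Suc r \<le> i"
  defines "v \<equiv> row_rhs p i y (Suc r) (a (Suc r))"
  shows "back_solvable p e i (Suc r) y a \<longleftrightarrow>
         int p ^ e (Suc r) dvd v \<and> back_solvable p e i r (y(Suc r := v div int p ^ e (Suc r))) a"
proof
  assume "back_solvable p e i (Suc r) y a"
  then obtain x where x: "\<forall>s\<in>{Suc (Suc r)..i}. x s = y s"
    and eqs: "\<forall>j\<in>{1..Suc r}. int p ^ e j * x j = row_rhs p i x j (a j)"
    unfolding back_solvable_def by blast
  have "v = row_rhs p i x (Suc r) (a (Suc r))" unfolding v_def by (rule row_rhs_cong) (use x in auto)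
  also have "\<dots> = int p ^ e (Suc r) * x (Suc r)" using eqs by simp
  finally have v: "v = int p ^ e (Suc r) * x (Suc r)" .
  then have "\<forall>s\<in>{Suc r..i}. x s = (y(Suc r := v div int p ^ e (Suc r))) s"
    using x assms(1) by (auto simp: le_Suc_eq Suc_le_eq)
  with eqs have "back_solvable p e i r (y(Suc r := v div int p ^ e (Suc r))) a"
    unfolding back_solvable_def by (intro exI[of _ x]) auto
  with v show "int p ^ e (Suc r) dvd v \<and> back_solvable p e i r (y(Suc r := v div int p ^ e (Suc r))) a"
    by simp
next
  assume "int p ^ e (Suc r) dvd v \<and> back_solvable p e i r (y(Suc r := v div int p ^ e (Suc r))) a"
  then obtain x where dvd: "int p ^ e (Suc r) dvd v"
    and x: "\<forall>s\<in>{Suc r..i}. x s = (y(Suc r := v div int p ^ e (Suc r))) s"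
    and eqs: "\<forall>j\<in>{1..r}. int p ^ e j * x j = row_rhs p i x j (a j)"
    unfolding back_solvable_def by blast
  have "row_rhs p i x (Suc r) (a (Suc r)) = v" unfolding v_def by (rule row_rhs_cong) (use x in auto)
  also have "\<dots> = int p ^ e (Suc r) * x (Suc r)" using dvd x assms(2) by auto
  finally have "\<forall>j\<in>{1..Suc r}. int p ^ e j * x j = row_rhs p i x j (a j)"
    using eqs by (auto simp: le_Suc_eq)
  moreover have "\<forall>s\<in>{Suc (Suc r)..i}. x s = y s" using x by auto
  ultimately show "back_solvable p e i (Suc r) y a" unfolding back_solvable_def by blast
qed

lemma card_back_solvable_Suc:
  assumes "p > 0" "Suc r \<le> i"
  shows "card {a \<in> triangle_box p e i (Suc r). back_solvable p e i (Suc r) y a} =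
    (\<Sum>row\<in>box p (e (Suc r) - 1) {Suc (Suc r)..i}.
       if int p ^ e (Suc r) dvd row_rhs p i y (Suc r) row
       then card {a \<in> triangle_box p e i r.
         back_solvable p e i r (y(Suc r := row_rhs p i y (Suc r) row div int p ^ e (Suc r))) a}
       else 0)"
proof -
  have split: "{1..Suc r} = insert (Suc r) {1..r}" by auto
  have "back_solvable p e i r y' (a(Suc r := row)) = back_solvable p e i r y' a" for y' a row
    unfolding back_solvable_def by auto
  then show ?thesis
    unfolding split using assms back_solvable_Suc[OF assms]
    by (subst card_zero_PiE_insert_outer) (auto intro!: finite_zero_PiE finite_box sum.cong)
qed

lemma tuples_eq_triangle_box: "tuples i e p = triangle_box p e i (i - 1)"
proof -
  have idx: "(1 \<le> r \<and> r < s \<and> s \<le> i) \<longleftrightarrow> r \<in> {1..i-1} \<and> s \<in> {Suc r..i}" for r s :: nat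
    by auto
  show ?thesis
    unfolding tuples_def zero_PiE_def zero_fun_def idx
    by (auto simp only: fun_eq_iff mem_Collect_eq atLeastLessThan_iff)
qed

lemma Amat_row_sum:
  assumes a: "\<forall>r s. \<not> (1 \<le> r \<and> r < s \<and> s \<le> i) \<longrightarrow> a r s = 0"
    and "i < n" "1 \<le> r" "r < n"
  shows "(\<Sum>s=1..n. Amat n e P a r s * x s) = P ^ e r * x r + P * (\<Sum>s\<in>{Suc r..i}. a r s * x s) + x n"
proof -
  define T where "T = {Suc r..i}"
  have "(\<Sum>s=1..n. Amat n e P a r s * x s) = (\<Sum>s=1..n. (if s = n then x n else 0)
          + (if s = r then P ^ e r * x r else 0) + (if s \<in> T then P * (a r s * x s) else 0))"
  proof (rule sum.cong[OF refl])
    fix s assume "s \<in> {1..n}"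
    then show "Amat n e P a r s * x s = (if s = n then x n else 0)
          + (if s = r then P ^ e r * x r else 0) + (if s \<in> T then P * (a r s * x s) else 0)"
      using assms(2-4) a by (auto simp: Amat_def T_def)
  qed
  also have "\<dots> = x n + P ^ e r * x r + (\<Sum>s\<in>{1..n} \<inter> T. P * (a r s * x s))"
    using assms(2-4) by (simp only: sum.distrib sum.inter_restrict[OF finite_atLeastAtMost]) simp
  also have "{1..n} \<inter> T = T" using assms(2-4) by (auto simp: T_def)
  finally show ?thesis by (simp add: sum_distrib_left T_def)
qed

lemma Amat_last_row_sum:
  assumes "n \<ge> 1"
  shows "(\<Sum>s=1..n. Amat n e P a n s * x s) = x n"
proof -
  have "(\<Sum>s=1..n. Amat n e P a n s * x s) = (\<Sum>s=1..n. if s = n then x s else 0)"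
    by (rule sum.cong) (auto simp: Amat_def)
  with assms show ?thesis by simp
qed

lemma hadamard_col_Amat:
  assumes "i < n" "r \<le> n"
  shows "hadamard (col (Amat n e P a) i) (col (Amat n e P a) i) r =
         (if r = i then P ^ e i * P ^ e i else if r < i then P ^ 2 * (a r i)\<^sup>2 else 0)"
  using assms by (auto simp: hadamard_def col_def Amat_def power2_eq_square)

lemma col_span_imp_back_solution:
  assumes a: "\<forall>r s. \<not> (1 \<le> r \<and> r < s \<and> s \<le> i) \<longrightarrow> a r s = 0"
    and i: "1 \<le> i" "i < n" and p: "p > 0"
    and span: "in_int_col_span n (Amat n e (int p) a)
                 (hadamard (col (Amat n e (int p) a) i) (col (Amat n e (int p) a) i))"
  shows "\<exists>x. x i = int p ^ e i \<and> (\<forall>j\<in>{1..i-1}. int p ^ e j * x j = row_rhs p i x j (a j))"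
proof -
  obtain x where x: "\<forall>r\<in>{1..n}. hadamard (col (Amat n e (int p) a) i) (col (Amat n e (int p) a) i) r =
                                 (\<Sum>s=1..n. Amat n e (int p) a r s * x s)"
    using span unfolding in_int_col_span_def by blast
  have x_at: "hadamard (col (Amat n e (int p) a) i) (col (Amat n e (int p) a) i) r =
              (\<Sum>s=1..n. Amat n e (int p) a r s * x s)" if "1 \<le> r" "r \<le> n" for r
    using x that by simp
  have xn: "x n = 0"
    using x_at[of n] Amat_last_row_sum[of n e "int p" a x] hadamard_col_Amat[OF i(2), of n] i by simp
  have "int p ^ e i * int p ^ e i = int p ^ e i * x i"
    using x_at[of i] Amat_row_sum[OF a i(2) i] hadamard_col_Amat[OF i(2), of i] i xn by simp
  then have "x i = int p ^ e i" using p by simp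
  moreover have "int p ^ e j * x j = row_rhs p i x j (a j)" if "j \<in> {1..i-1}" for j
  proof -
    have j: "1 \<le> j" "j < i" "j < n" using that i by auto
    then show ?thesis
      using x_at[of j] Amat_row_sum[OF a i(2) j(1) j(3)] hadamard_col_Amat[OF i(2), of j] xn
      by (simp add: row_rhs_def)
  qed
  ultimately show ?thesis by blast
qed

lemma back_solution_in_col_span:
  assumes a: "\<forall>r s. \<not> (1 \<le> r \<and> r < s \<and> s \<le> i) \<longrightarrow> a r s = 0"
    and i: "1 \<le> i" "i < n"
    and xi: "x i = int p ^ e i" and eqs: "\<forall>j\<in>{1..i-1}. int p ^ e j * x j = row_rhs p i x j (a j)"
  shows "in_int_col_span n (Amat n e (int p) a)
           (hadamard (col (Amat n e (int p) a) i) (col (Amat n e (int p) a) i))"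
proof -
  define x' where "x' s = (if s \<le> i then x s else 0)" for s
  have x'n: "x' n = 0" using i by (simp add: x'_def)
  have "hadamard (col (Amat n e (int p) a) i) (col (Amat n e (int p) a) i) r =
        (\<Sum>s=1..n. Amat n e (int p) a r s * x' s)" if r: "r \<in> {1..n}" for r
  proof -
    consider "r = n" | "i < r" "r < n" | "r = i" | "r < i" using r by fastforce
    then show ?thesis
    proof cases
      case 1
      then show ?thesis
        using Amat_last_row_sum[of n e "int p" a x'] hadamard_col_Amat[OF i(2), of r] i x'n by simp
    next
      case 2
      then show ?thesis
        using Amat_row_sum[OF a i(2), of r e "int p" x'] hadamard_col_Amat[OF i(2), of r] i x'n
        by (simp add: x'_def)
    next
      case 3
      then show ?thesis
        using Amat_row_sum[OF a i(2) i, of e "int p" x'] hadamard_col_Amat[OF i(2), of r] xi x'n i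
        by (simp add: x'_def)
    next
      case 4
      have "(\<Sum>s\<in>{Suc r..i}. a r s * x' s) = (\<Sum>s\<in>{Suc r..i}. a r s * x s)"
        by (rule sum.cong) (auto simp: x'_def)
      moreover have "1 \<le> r" "r < n" "x' r = x r" using r 4 i by (auto simp: x'_def)
      ultimately show ?thesis
        using Amat_row_sum[OF a i(2), of r e "int p" x'] hadamard_col_Amat[OF i(2), of r] x'n 4
          eqs[rule_format, of r]
        by (simp add: row_rhs_def)
    qed
  qed
  then show ?thesis unfolding in_int_col_span_def by blast
qed

lemma in_span_iff_back_solvable:
  assumes i: "1 \<le> i" "i < n" and p: "p > 0" and a: "a \<in> tuples i e p"
  defines "A \<equiv> Amat n e (int p) a"
  shows "in_int_col_span n A (hadamard (col A i) (col A i)) \<longleftrightarrow>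
         back_solvable p e i (i - 1) (\<lambda>_. int p ^ e i) a"
proof -
  have a0: "\<forall>r s. \<not> (1 \<le> r \<and> r < s \<and> s \<le> i) \<longrightarrow> a r s = 0"
    using a by (simp add: tuples_def)
  have solvable: "back_solvable p e i (i - 1) (\<lambda>_. int p ^ e i) a \<longleftrightarrow>
        (\<exists>x. x i = int p ^ e i \<and> (\<forall>j\<in>{1..i-1}. int p ^ e j * x j = row_rhs p i x j (a j)))"
    using i by (simp add: back_solvable_def)
  show ?thesis
    using col_span_imp_back_solution[OF a0 i p] back_solution_in_col_span[OF a0 i]
    unfolding solvable A_def by blast
qed

lemma row_rhs_split:
  assumes "Suc R \<le> i" "y i = int p ^ Suc D"
  shows "row_rhs p i y R row =
         int p * (int p * (row i * (row i - int p ^ D)) - (\<Sum>s\<in>{Suc R..i-1}. row s * y s))"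
proof -
  have "{Suc R..i} = insert i {Suc R..i-1}" using assms(1) by auto
  then have "(\<Sum>s\<in>{Suc R..i}. row s * y s) = row i * y i + (\<Sum>s\<in>{Suc R..i-1}. row s * y s)"
    using assms(1) by simp
  with assms(2) show ?thesis by (simp add: row_rhs_def algebra_simps power2_eq_square)
qed

lemma transition_iff:
  assumes p: "prime p" and y: "capped_val p c S y = g" and c: "c' \<le> c" and R: "R \<notin> S"
    and t: "t \<le> c'"
  shows "int p ^ Suc k dvd int p * z \<and>
           capped_val p c' (insert R S) (y(R := int p * z div int p ^ Suc k)) = t \<longleftrightarrow>
         t \<le> g \<and> int p ^ (k + t) dvd z \<and> (t < c' \<and> t \<noteq> g \<longrightarrow> \<not> int p ^ Suc (k + t) dvd z)"
proof -
  define P where "P = int p"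
  have P: "P \<noteq> 0" using p by (simp add: P_def)
  have shift: "P ^ (k + u) dvd P ^ k * w \<longleftrightarrow> P ^ u dvd w" for u w
    using power_dvd_power_mult_iff[OF P, of "k + u" k w] by simp
  show ?thesis
  proof (cases "P ^ k dvd z")
    case True
    then obtain w where w: "z = P ^ k * w" by (elim dvdE)
    have "P * z div P ^ Suc k = w" using P by (simp add: w)
    then show ?thesis
      using capped_val_insert[OF y c R t, of w] shift[of t w] shift[of "Suc t" w] P
      by (simp add: w P_def[symmetric] mult.assoc)
  next
    case False
    then have "\<not> P ^ (k + t) dvd z" by (meson dvd_trans le_add1 le_imp_power_dvd)
    with False P show ?thesis by (simp flip: P_def)
  qed
qed

definition residual_count :: "nat \<Rightarrow> nat \<Rightarrow> nat \<Rightarrow> nat \<Rightarrow> nat \<Rightarrow> nat \<Rightarrow> nat" where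
  "residual_count p k sz D g m = quad_root_count p k (min g m - 1) D * p ^ (k * sz - (m - min g m))"

lemma card_box_dvd_residual:
  fixes y :: "'a \<Rightarrow> int"
  assumes p: "prime p" and S: "finite S" "i \<notin> S" and y: "capped_val p c S y = g"
    and m: "m \<le> k + g" "m \<le> c"
  shows "card {row \<in> box p k (insert i S).
           int p ^ m dvd int p * (row i * (row i - int p ^ D)) - (\<Sum>s\<in>S. row s * y s)} =
         residual_count p k (card S) D g m"
proof -
  define h where "h = min g m"
  have g: "g \<le> c" "\<forall>s\<in>S. int p ^ g dvd y s" "g < c \<longrightarrow> (\<exists>s\<in>S. \<not> int p ^ Suc g dvd y s)"
    using y by (simp_all add: capped_val_eq_iff)
  have hy: "\<forall>s\<in>S. int p ^ h dvd y s"
  proof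
    fix s assume "s \<in> S"
    moreover have "int p ^ h dvd int p ^ g" by (simp add: h_def le_imp_power_dvd)
    ultimately show "int p ^ h dvd y s" using g(2) dvd_trans by blast
  qed
  have hm: "h \<le> m" "m \<le> h + k" using m by (auto simp: h_def)
  have wit: "\<exists>s\<in>S. \<not> int p ^ Suc h dvd y s" if "h < m"
    using that g(3) m by (auto simp: h_def)
  have inner: "card {f \<in> box p k S. int p ^ m dvd w - (\<Sum>s\<in>S. f s * y s)} =
               (if int p ^ h dvd w then p ^ (k * card S - (m - h)) else 0)" for w
    by (rule card_box_dvd_diff_sum[OF p S(1) hy hm wit])
  have same: "(\<Sum>s\<in>S. (if s = i then b else f s) * y s) = (\<Sum>s\<in>S. f s * y s)"
    for f :: "'a \<Rightarrow> int" and b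
    using S(2) by (intro sum.cong) auto
  have "card {row \<in> box p k (insert i S).
           int p ^ m dvd int p * (row i * (row i - int p ^ D)) - (\<Sum>s\<in>S. row s * y s)} =
        (\<Sum>b\<in>{0..<int p ^ k}. card {f \<in> box p k S.
           int p ^ m dvd int p * (b * (b - int p ^ D)) - (\<Sum>s\<in>S. f s * y s)})"
    using S by (subst card_zero_PiE_insert_outer) (simp_all add: finite_box same)
  also have "\<dots> = (\<Sum>b\<in>{0..<int p ^ k}.
                    if int p ^ h dvd int p * (b * (b - int p ^ D)) then p ^ (k * card S - (m - h)) else 0)"
    by (simp add: inner)
  also have "\<dots> = quad_root_count p k (h - 1) D * p ^ (k * card S - (m - h))"
  proof -
    have "int p ^ h dvd int p * X \<longleftrightarrow> int p ^ (h - 1) dvd X" for X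
      using p power_dvd_power_mult_iff[of "int p" h 1 X] by simp
    then show ?thesis by (simp add: sum.If_cases quad_root_count_def Int_def)
  qed
  finally show ?thesis by (simp add: residual_count_def h_def)
qed

definition transition_count :: "nat \<Rightarrow> nat \<Rightarrow> nat \<Rightarrow> nat \<Rightarrow> nat \<Rightarrow> nat \<Rightarrow> nat \<Rightarrow> rat" where
  "transition_count p k sz D g c' t =
     (if t \<le> g then of_nat (residual_count p k sz D g (k + t)) -
        (if t < c' \<and> t \<noteq> g then of_nat (residual_count p k sz D g (Suc (k + t))) else 0)
      else 0)"

lemma card_transition:
  assumes p: "prime p" and R: "Suc R \<le> i" and eR: "e R = Suc k" and yi: "y i = int p ^ Suc D"
    and y: "capped_val p (c' + e R) {Suc R..i-1} y = g" and t: "t \<le> c'"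
  shows "of_nat (card {row \<in> box p k {Suc R..i}. int p ^ e R dvd row_rhs p i y R row \<and>
            capped_val p c' {R..i-1} (y(R := row_rhs p i y R row div int p ^ e R)) = t}) =
         transition_count p k (card {Suc R..i-1}) D g c' t"
proof -
  define S where "S = {Suc R..i-1}"
  define z where "z row = int p * (row i * (row i - int p ^ D)) - (\<Sum>s\<in>S. row s * y s)" for row
  define N where "N m = {row \<in> box p k (insert i S). int p ^ m dvd z row}" for m
  have S: "finite S" "i \<notin> S" "R \<notin> S" "{Suc R..i} = insert i S" "{R..i-1} = insert R S"
    using R by (auto simp: S_def)
  define M where "M = N (k + t) - (if t < c' \<and> t \<noteq> g then N (Suc (k + t)) else {})"
  have "int p ^ e R dvd row_rhs p i y R row \<and>
          capped_val p c' {R..i-1} (y(R := row_rhs p i y R row div int p ^ e R)) = t \<longleftrightarrow>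
        t \<le> g \<and> row \<in> M"
    if "row \<in> box p k (insert i S)" for row
  proof -
    have rhs: "row_rhs p i y R row = int p * z row"
      by (simp add: z_def S_def row_rhs_split[of R i y p D, OF R yi])
    have "int p ^ e R dvd row_rhs p i y R row \<and>
          capped_val p c' {R..i-1} (y(R := row_rhs p i y R row div int p ^ e R)) = t \<longleftrightarrow>
        t \<le> g \<and> int p ^ (k + t) dvd z row \<and> (t < c' \<and> t \<noteq> g \<longrightarrow> \<not> int p ^ Suc (k + t) dvd z row)"
      unfolding S(5) eR rhs by (intro transition_iff[OF p y[folded S_def] _ S(3) t]) simp
    with that show ?thesis by (auto simp: M_def N_def)
  qed
  then have "{row \<in> box p k {Suc R..i}. int p ^ e R dvd row_rhs p i y R row \<and>
               capped_val p c' {R..i-1} (y(R := row_rhs p i y R row div int p ^ e R)) = t} =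
             {row \<in> box p k (insert i S). t \<le> g \<and> row \<in> M}"
    unfolding S(4) by blast
  also have "\<dots> = (if t \<le> g then M else {})" by (auto simp: M_def N_def)
  finally have set_eq: "{row \<in> box p k {Suc R..i}. int p ^ e R dvd row_rhs p i y R row \<and>
               capped_val p c' {R..i-1} (y(R := row_rhs p i y R row div int p ^ e R)) = t} =
             (if t \<le> g then M else {})" .
  have card_N: "card (N m) = residual_count p k (card S) D g m" if "m \<le> k + g" "m \<le> c' + e R" for m
    unfolding N_def z_def using card_box_dvd_residual[OF p S(1,2) y[folded S_def] that] .
  have "N (Suc m) \<subseteq> N m" "finite (N m)" for m
    using S(1) by (auto simp: N_def finite_box le_imp_power_dvd intro: dvd_trans[rotated])
  then have "of_nat (card M) = of_nat (card (N (k + t))) -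
               (if t < c' \<and> t \<noteq> g then of_nat (card (N (Suc (k + t)))) else (0::rat))"
    by (simp add: M_def card_Diff_subset of_nat_diff card_mono)
  then show ?thesis
    unfolding set_eq using t eR card_N[of "k + t"] card_N[of "Suc (k + t)"]
    by (simp add: transition_count_def S_def)
qed

lemma poly_on_primes_residual_count: "poly_on_primes (\<lambda>p. of_nat (residual_count p k sz D g m))"
  unfolding residual_count_def of_nat_mult of_nat_power
  by (intro poly_on_primes_mult poly_on_primes_quad_root_count poly_on_primes_power)

lemma poly_on_primes_transition_count: "poly_on_primes (\<lambda>p. transition_count p k sz D g c' t)"
  unfolding transition_count_def
  by (intro poly_on_primes_If poly_on_primes_diff poly_on_primes_residual_count poly_on_primes_const)

lemma sum_if_eq_sum_card:
  fixes h :: "'b \<Rightarrow> 'c::semiring_1"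
  assumes "finite B" "finite T" "\<And>x. x \<in> B \<Longrightarrow> P x \<Longrightarrow> f x \<in> T"
  shows "(\<Sum>x\<in>B. if P x then h (f x) else 0) = (\<Sum>t\<in>T. of_nat (card {x \<in> B. P x \<and> f x = t}) * h t)"
proof -
  have "(\<Sum>t\<in>T. of_nat (card {x \<in> B. P x \<and> f x = t}) * h t) =
        (\<Sum>t\<in>T. \<Sum>x\<in>B. if P x \<and> f x = t then h t else 0)"
    using assms(1) by (simp add: sum.If_cases Int_def conj_commute)
  also have "\<dots> = (\<Sum>x\<in>B. \<Sum>t\<in>T. if P x \<and> f x = t then h t else 0)"
    by (rule sum.swap)
  also have "\<dots> = (\<Sum>x\<in>B. if P x then h (f x) else 0)"
  proof (rule sum.cong[OF refl])
    fix x assume "x \<in> B"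
    then show "(\<Sum>t\<in>T. if P x \<and> f x = t then h t else 0) = (if P x then h (f x) else 0)"
      using assms(2) assms(3)[of x] by (cases "P x") (simp_all add: sum.delta)
  qed
  finally show ?thesis ..
qed

definition val_cap :: "(nat \<Rightarrow> nat) \<Rightarrow> nat \<Rightarrow> nat" where
  "val_cap e r = (\<Sum>j\<in>{1..r}. e j)"

lemma card_back_solvable_Suc_transitions:
  fixes q :: "nat \<Rightarrow> rat"
  assumes p: "prime p" and R: "Suc (Suc r) \<le> i" and eR: "e (Suc r) = Suc k"
    and yi: "y i = int p ^ Suc D" and y: "capped_val p (c' + e (Suc r)) {Suc (Suc r)..i-1} y = g"
    and q: "\<And>y'. y' i = int p ^ Suc D \<Longrightarrow>
              of_nat (card {a \<in> triangle_box p e i r. back_solvable p e i r y' a}) =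
              q (capped_val p c' {Suc r..i-1} y')"
  shows "of_nat (card {a \<in> triangle_box p e i (Suc r). back_solvable p e i (Suc r) y a}) =
         (\<Sum>u\<le>c'. transition_count p k (card {Suc (Suc r)..i-1}) D g c' u * q u)"
proof -
  let ?B = "box p k {Suc (Suc r)..i}"
  define dv where "dv row \<longleftrightarrow> int p ^ e (Suc r) dvd row_rhs p i y (Suc r) row" for row
  define y' where "y' row = y(Suc r := row_rhs p i y (Suc r) row div int p ^ e (Suc r))" for row
  define t where "t row = capped_val p c' {Suc r..i-1} (y' row)" for row
  have "of_nat (card {a \<in> triangle_box p e i (Suc r). back_solvable p e i (Suc r) y a}) =
        (\<Sum>row\<in>?B. if dv row then q (t row) else 0)"
    using card_back_solvable_Suc[of p r i e y] q p R yi
    by (simp add: eR dv_def y'_def t_def prime_gt_0_nat of_nat_sum if_distrib cong: if_cong)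
  also have "\<dots> = (\<Sum>u\<le>c'. of_nat (card {row \<in> ?B. dv row \<and> t row = u}) * q u)"
    by (rule sum_if_eq_sum_card) (simp_all add: finite_box t_def capped_val_le)
  also have "\<dots> = (\<Sum>u\<le>c'. transition_count p k (card {Suc (Suc r)..i-1}) D g c' u * q u)"
    using card_transition[of p "Suc r" i e k y D c' g, OF p R eR yi y]
    by (simp add: dv_def t_def y'_def)
  finally show ?thesis .
qed

lemma count_back_solvable_poly:
  assumes e: "\<forall>j\<in>{1..i}. e j \<ge> 1" and r: "r < i"
  shows "\<exists>Q :: rat poly. \<forall>p y. prime p \<longrightarrow> y i = int p ^ e i \<longrightarrow>
           capped_val p (val_cap e r) {Suc r..i-1} y = g \<longrightarrow>
           of_nat (card {a \<in> triangle_box p e i r. back_solvable p e i r y a}) = poly Q (of_nat p)"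
  using r
proof (induction r arbitrary: g)
  case 0
  have "back_solvable p e i 0 y a" for p y a unfolding back_solvable_def by auto
  then show ?case by (intro exI[of _ "[:1:]"]) (simp add: zero_fun_def)
next
  case (Suc r)
  define c' k D where "c' = val_cap e r" and "k = e (Suc r) - 1" and "D = e i - 1"
  have "e (Suc r) \<ge> 1" "e i \<ge> 1" using e Suc.prems by auto
  then have eR: "e (Suc r) = Suc k" and ei: "e i = Suc D" by (simp_all add: k_def D_def)
  have "\<forall>t. \<exists>Q :: rat poly. \<forall>p y. prime p \<longrightarrow> y i = int p ^ e i \<longrightarrow>
          capped_val p c' {Suc r..i-1} y = t \<longrightarrow>
          of_nat (card {a \<in> triangle_box p e i r. back_solvable p e i r y a}) = poly Q (of_nat p)"
    using Suc by (simp add: c'_def)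
  from choice[OF this] obtain Qf :: "nat \<Rightarrow> rat poly" where Qf: "\<And>p y. prime p \<Longrightarrow> y i = int p ^ e i \<Longrightarrow>
      of_nat (card {a \<in> triangle_box p e i r. back_solvable p e i r y a}) =
      poly (Qf (capped_val p c' {Suc r..i-1} y)) (of_nat p)"
    by blast
  define sz where "sz = card {Suc (Suc r)..i-1}"
  obtain Lf where Lf: "\<And>t p. prime p \<Longrightarrow> transition_count p k sz D g c' t = poly (Lf t) (of_nat p)"
    using choice[of "\<lambda>t L. \<forall>p. prime p \<longrightarrow> transition_count p k sz D g c' t = poly L (of_nat p)"]
      poly_on_primes_transition_count unfolding poly_on_primes_def by blast
  show ?case
  proof (intro exI[of _ "\<Sum>t\<le>c'. Lf t * Qf t"] allI impI)
    fix p y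
    assume p: "prime p" and yi: "y i = int p ^ e i"
      and y: "capped_val p (val_cap e (Suc r)) {Suc (Suc r)..i-1} y = g"
    have cap: "val_cap e (Suc r) = c' + e (Suc r)" by (simp add: val_cap_def c'_def)
    have q: "\<And>y'. y' i = int p ^ Suc D \<Longrightarrow>
        of_nat (card {a \<in> triangle_box p e i r. back_solvable p e i r y' a}) =
        poly (Qf (capped_val p c' {Suc r..i-1} y')) (of_nat p)"
      using Qf[OF p] unfolding ei by blast
    have "of_nat (card {a \<in> triangle_box p e i (Suc r). back_solvable p e i (Suc r) y a}) =
          (\<Sum>u\<le>c'. transition_count p k sz D g c' u * poly (Qf u) (of_nat p))"
      unfolding sz_def using yi[unfolded ei] y[unfolded cap] Suc.prems
      by (intro card_back_solvable_Suc_transitions[where q = "\<lambda>u. poly (Qf u) (of_nat p)", OF p _ eR _ _ q])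
         simp_all
    also have "\<dots> = poly (\<Sum>u\<le>c'. Lf u * Qf u) (of_nat p)"
      by (simp add: Lf[OF p] poly_sum)
    finally show "of_nat (card {a \<in> triangle_box p e i (Suc r). back_solvable p e i (Suc r) y a}) =
                  poly (\<Sum>u\<le>c'. Lf u * Qf u) (of_nat p)" .
  qed
qed

theorem proposition3p1:
  fixes n i :: nat and e :: "nat \<Rightarrow> nat"
  assumes "n \<ge> 2" and "1 \<le> i" and "i \<le> n - 1"
    and "\<forall>r \<in> {1..n - 1}. e r > 0"
  shows "\<exists>P :: rat poly. \<forall>p :: nat. prime p \<longrightarrow>
           of_nat (count_sq n i e p) = poly P (of_nat p)"
proof -
  have i: "1 \<le> i" "i < n" using assms(1-3) by auto
  have "\<forall>j\<in>{1..i}. e j \<ge> 1" using assms(3,4) by (auto simp: Suc_le_eq)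
  from count_back_solvable_poly[OF this, of "i - 1" "val_cap e (i - 1)"] i(1)
  obtain Q :: "rat poly" where Q: "\<And>p y. prime p \<Longrightarrow> y i = int p ^ e i \<Longrightarrow>
      capped_val p (val_cap e (i - 1)) {} y = val_cap e (i - 1) \<Longrightarrow>
      of_nat (card {a \<in> tuples i e p. back_solvable p e i (i - 1) y a}) = poly Q (of_nat p)"
    by (auto simp: tuples_eq_triangle_box)
  show ?thesis
  proof (intro exI[of _ Q] allI impI)
    fix p :: nat assume p: "prime p"
    have "count_sq n i e p = card {a \<in> tuples i e p. back_solvable p e i (i - 1) (\<lambda>_. int p ^ e i) a}"
      unfolding count_sq_def using in_span_iff_back_solvable[OF i prime_gt_0_nat[OF p]]
      by (intro arg_cong[where f = card] Collect_cong) blast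
    then show "of_nat (count_sq n i e p) = poly Q (of_nat p)"
      using Q[OF p] by (simp add: capped_val_eq_iff)
  qed
qed

end
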